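(* Let $G=(V,E)$ be a finite, undirected, unweighted, 2-vertex-connected graph with $n=|V|$ vertices. Suppose $T$ is a minimum spanning tree of $G$ and $C_T$ is a simple cycle in $G$ whose vertex set contains every vertex that has odd degree in $T$. Then $G$ has a TSP tour of length at most $4n/3$.
   Context: A TSP tour of $G$ (graph-TSP, i.e. TSP in the shortest-path metric of $G$) is a closed walk in $G$ that visits every vertex at least once; its length is the number of edges traversed, counted with multiplicity. Since $G$ is unweighted, every spanning tree of $G$ is a minimum spanning tree. The cycle $C_T$ may contain arbitrarily many vertices of even degree in $T$. *)

theory Defs
  imports Complex_Main
begin

definition graph :: "'a set \<Rightarrow> 'a set set \<Rightarrow> bool" where
  "graph V E \<longleftrightarrow> finite V \<and> (\<forall>e\<in>E. e \<subseteq> V \<and> card e = 2)"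

definition walk :: "'a set \<Rightarrow> 'a set set \<Rightarrow> 'a list \<Rightarrow> bool" where
  "walk V E xs \<longleftrightarrow> xs \<noteq> [] \<and> set xs \<subseteq> V \<and>
     (\<forall>i. Suc i < length xs \<longrightarrow> {xs ! i, xs ! Suc i} \<in> E)"

definition walk_length :: "'a list \<Rightarrow> nat" where
  "walk_length xs = length xs - 1"

definition connected_graph :: "'a set \<Rightarrow> 'a set set \<Rightarrow> bool" where
  "connected_graph V E \<longleftrightarrow>
     (\<forall>u\<in>V. \<forall>v\<in>V. \<exists>xs. walk V E xs \<and> hd xs = u \<and> last xs = v)"

definition two_vertex_connected :: "'a set \<Rightarrow> 'a set set \<Rightarrow> bool" where
  "two_vertex_connected V E \<longleftrightarrow> card V > 2 \<and> connected_graph V E \<and>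
     (\<forall>v\<in>V. connected_graph (V - {v}) {e\<in>E. v \<notin> e})"

definition simple_cycle :: "'a set \<Rightarrow> 'a set set \<Rightarrow> 'a list \<Rightarrow> bool" where
  "simple_cycle V E cs \<longleftrightarrow> length cs \<ge> 3 \<and> distinct cs \<and> walk V E cs \<and>
     {last cs, hd cs} \<in> E"

definition acyclic_graph :: "'a set \<Rightarrow> 'a set set \<Rightarrow> bool" where
  "acyclic_graph V E \<longleftrightarrow> \<not> (\<exists>cs. simple_cycle V E cs)"

definition spanning_tree :: "'a set \<Rightarrow> 'a set set \<Rightarrow> 'a set set \<Rightarrow> bool" where
  "spanning_tree V E T \<longleftrightarrow> T \<subseteq> E \<and> connected_graph V T \<and> acyclic_graph V T"

text \<open>Minimum spanning tree for unit edge weights (weight = number of edges).\<close>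

definition min_spanning_tree :: "'a set \<Rightarrow> 'a set set \<Rightarrow> 'a set set \<Rightarrow> bool" where
  "min_spanning_tree V E T \<longleftrightarrow> spanning_tree V E T \<and>
     (\<forall>T'. spanning_tree V E T' \<longrightarrow> card T \<le> card T')"

definition degree :: "'a set set \<Rightarrow> 'a \<Rightarrow> nat" where
  "degree E v = card {e\<in>E. v \<in> e}"

definition tsp_tour :: "'a set \<Rightarrow> 'a set set \<Rightarrow> 'a list \<Rightarrow> bool" where
  "tsp_tour V E xs \<longleftrightarrow> walk V E xs \<and> hd xs = last xs \<and> set xs = V"

end

(*
  Two tours are compared. Going once around C and attaching each of the n - |C| vertices
  off C by a detour of length 2 gives a tour of length 2n - |C|. Alternatively, the odd-degree
  vertices of T lie on C and can be paired up by arcs of C of total length at most |C|/2;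
  traversing every tree edge once and these arcs once gives a closed walk through all vertices
  of length at most n - 1 + |C|/2, built leaf by leaf along T. The smaller of the two bounds is
  at most 4n/3.
*)

theory Submission
  imports Defs "HOL-Library.Disjoint_Sets"
begin

definition closed_walk :: "'a set \<Rightarrow> 'a set set \<Rightarrow> 'a list \<Rightarrow> bool" where
  "closed_walk V E xs \<longleftrightarrow> walk V E xs \<and> hd xs = last xs"

lemma walk_iff_successively:
  "walk V E xs \<longleftrightarrow> xs \<noteq> [] \<and> set xs \<subseteq> V \<and> successively (\<lambda>a b. {a, b} \<in> E) xs"
  by (auto simp: walk_def successively_conv_nth)

lemma walk_not_Nil: "walk V E xs \<Longrightarrow> xs \<noteq> []"
  by (simp add: walk_def)

lemma walk_hd_in: "walk V E xs \<Longrightarrow> hd xs \<in> V"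
  by (auto simp: walk_def)

lemma walk_length_Cons: "xs \<noteq> [] \<Longrightarrow> walk_length (x # xs) = walk_length xs + 1"
  by (simp add: walk_length_def)

lemma walk_length_append:
  "xs \<noteq> [] \<Longrightarrow> ys \<noteq> [] \<Longrightarrow> walk_length (xs @ ys) = walk_length xs + walk_length ys + 1"
  by (cases xs; cases ys) (simp_all add: walk_length_def)

lemma walk_singleton [simp]: "walk V E [x] \<longleftrightarrow> x \<in> V"
  by (simp add: walk_iff_successively)

lemma walk_Cons:
  "walk V E ys \<Longrightarrow> x \<in> V \<Longrightarrow> {x, hd ys} \<in> E \<Longrightarrow> walk V E (x # ys)"
  by (auto simp: walk_iff_successively successively_Cons)

lemma walk_append:
  "walk V E xs \<Longrightarrow> walk V E ys \<Longrightarrow> {last xs, hd ys} \<in> E \<Longrightarrow> walk V E (xs @ ys)"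
  by (auto simp: walk_iff_successively successively_append_iff)

lemma walk_append_edge:
  "walk V E (xs @ ys) \<Longrightarrow> xs \<noteq> [] \<Longrightarrow> ys \<noteq> [] \<Longrightarrow> {last xs, hd ys} \<in> E"
  by (auto simp: walk_iff_successively successively_append_iff)

lemma walk_append_Cons_iff:
  "walk V E (as @ y # cs) \<longleftrightarrow> walk V E (as @ [y]) \<and> walk V E (y # cs)"
proof -
  have "as @ y # cs = (as @ [y]) @ cs" by simp
  then show ?thesis
    by (simp only: walk_iff_successively successively_append_iff successively_Cons)
      (cases cs; auto)
qed

lemma walk_rev: "walk V E xs \<Longrightarrow> walk V E (rev xs)"
  by (simp add: walk_iff_successively insert_commute)

lemma walk_take: "walk V E xs \<Longrightarrow> 0 < n \<Longrightarrow> walk V E (take n xs)"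
  using successively_append_iff[of _ "take n xs" "drop n xs"]
  by (auto simp: walk_iff_successively dest: in_set_takeD)

lemma walk_drop: "walk V E xs \<Longrightarrow> n < length xs \<Longrightarrow> walk V E (drop n xs)"
  using successively_append_iff[of _ "take n xs" "drop n xs"]
  by (auto simp: walk_iff_successively dest: in_set_dropD)

lemma walk_mono: "walk V E xs \<Longrightarrow> V \<subseteq> V' \<Longrightarrow> E \<subseteq> E' \<Longrightarrow> walk V' E' xs"
  unfolding walk_def by blast

lemma walk_splice:
  assumes "walk V E (as @ s # bs)" "walk V E ys" "hd ys = s" "last ys = s"
  shows "walk V E (as @ ys @ bs)"
proof -
  have "ys \<noteq> []" using walk_not_Nil[OF assms(2)] .
  then obtain ys1 ys2 where ys: "ys = s # ys1" "ys = ys2 @ [s]"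
    using assms(3,4) by (metis append_butlast_last_id list.collapse)
  have ends: "walk V E (as @ [s])" "walk V E (s # bs)"
    using walk_append_Cons_iff[THEN iffD1, OF assms(1)] by auto
  have "walk V E (ys2 @ s # bs)"
    using walk_append_Cons_iff[of V E ys2 s bs] ends(2) assms(2) ys(2) by simp
  then have "walk V E (s # ys1 @ bs)" using ys by (metis append_Cons append_assoc append_Nil)
  then have "walk V E (as @ s # ys1 @ bs)"
    using walk_append_Cons_iff[of V E as s "ys1 @ bs"] ends(1) by simp
  then show ?thesis using ys(1) by simp
qed

lemma closed_walk_splice:
  assumes "closed_walk V E xs" "s \<in> set xs" "closed_walk V E ys" "hd ys = s"
  obtains zs where "closed_walk V E zs" "set zs = set xs \<union> set ys"
    "walk_length zs = walk_length xs + walk_length ys"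
proof -
  obtain as bs where xs: "xs = as @ s # bs"
    using assms(2) by (meson split_list)
  have "ys \<noteq> []" "last ys = s"
    using assms(3,4) by (auto simp: closed_walk_def walk_def)
  then have "closed_walk V E (as @ ys @ bs)"
    using assms xs walk_splice[of V E as s bs ys] by (cases as; cases bs) (auto simp: closed_walk_def)
  moreover have "set (as @ ys @ bs) = set xs \<union> set ys"
    using xs assms(4) \<open>ys \<noteq> []\<close> by auto
  moreover have "walk_length (as @ ys @ bs) = walk_length xs + walk_length ys"
    using xs \<open>ys \<noteq> []\<close> by (cases ys) (simp_all add: walk_length_def)
  ultimately show thesis by (rule that)
qed

inductive leaf_tree :: "'a set set \<Rightarrow> 'a set \<Rightarrow> 'a set set \<Rightarrow> bool" for R where
  singleton: "leaf_tree R {r} {}"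
| add_leaf: "leaf_tree R S F \<Longrightarrow> s \<in> S \<Longrightarrow> u \<notin> S \<Longrightarrow> {s, u} \<in> R \<Longrightarrow>
    leaf_tree R (insert u S) (insert {s, u} F)"

lemma leaf_tree_edges: "leaf_tree R S F \<Longrightarrow> F \<subseteq> R \<and> (\<forall>e\<in>F. e \<subseteq> S)"
  by (induction rule: leaf_tree.induct) auto

lemma leaf_tree_card: "leaf_tree R S F \<Longrightarrow> finite S \<and> finite F \<and> card F + 1 = card S"
proof (induction rule: leaf_tree.induct)
  case (add_leaf S F s u)
  then have "{s, u} \<notin> F" using leaf_tree_edges by blast
  then show ?case using add_leaf by simp
qed simp

lemma connected_graph_add_leaf:
  assumes "connected_graph S F" "s \<in> S"
  shows "connected_graph (insert u S) (insert {s, u} F)"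
proof -
  let ?S = "insert u S" and ?F = "insert {s, u} F"
  have old: "\<exists>xs. walk ?S ?F xs \<and> hd xs = a \<and> last xs = b" if ab: "a \<in> S" "b \<in> S" for a b
  proof -
    obtain xs where "walk S F xs" "hd xs = a" "last xs = b"
      using assms(1)[unfolded connected_graph_def, rule_format, OF ab] by blast
    moreover have "walk ?S ?F xs" using walk_mono[OF \<open>walk S F xs\<close>, of ?S ?F] by blast
    ultimately show ?thesis by blast
  qed
  have to_u: "\<exists>xs. walk ?S ?F xs \<and> hd xs = a \<and> last xs = u" if a: "a \<in> ?S" for a
  proof (cases "a = u")
    case False
    then obtain xs where xs: "walk ?S ?F xs" "hd xs = a" "last xs = s"
      using old[OF _ assms(2)] a False by blast
    have "walk ?S ?F (xs @ [u])" by (rule walk_append) (use xs in auto)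
    then show ?thesis using xs by (intro exI[of _ "xs @ [u]"]) (simp add: walk_def)
  next
    case True
    then show ?thesis by (intro exI[of _ "[u]"]) simp
  qed
  show ?thesis unfolding connected_graph_def
  proof (intro ballI)
    fix a b assume ab: "a \<in> ?S" "b \<in> ?S"
    consider "a \<in> S" "b \<in> S" | "b = u" | "a = u" using ab by blast
    then show "\<exists>xs. walk ?S ?F xs \<and> hd xs = a \<and> last xs = b"
    proof cases
      case 3
      then obtain xs where "walk ?S ?F xs" "hd xs = b" "last xs = u" using to_u ab by blast
      then show ?thesis using 3 walk_rev walk_not_Nil
        by (intro exI[of _ "rev xs"]) (auto simp: hd_rev last_rev)
    qed (use old to_u ab in auto)
  qed
qed

lemma leaf_tree_connected: "leaf_tree R S F \<Longrightarrow> connected_graph S F"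
proof (induction rule: leaf_tree.induct)
  case (singleton r)
  then show ?case by (auto simp: connected_graph_def intro!: exI[of _ "[r]"])
qed (rule connected_graph_add_leaf)

lemma walk_exit_edge:
  assumes "walk V E xs" "hd xs \<in> S" "last xs \<notin> S"
  obtains a b where "a \<in> S" "b \<in> V - S" "{a, b} \<in> E"
proof -
  let ?ps = "takeWhile (\<lambda>x. x \<in> S) xs" and ?qs = "dropWhile (\<lambda>x. x \<in> S) xs"
  have ne: "xs \<noteq> []" using walk_not_Nil[OF assms(1)] .
  have ps: "?ps \<noteq> []" using ne assms(2) by (cases xs) auto
  have qs: "?qs \<noteq> []" using assms(3) ne by (auto simp: dropWhile_eq_Nil_conv)
  have "walk V E (?ps @ ?qs)" using assms(1) by simp
  then have "{last ?ps, hd ?qs} \<in> E" using ps qs by (rule walk_append_edge)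
  moreover have "last ?ps \<in> S" using ps by (meson last_in_set set_takeWhileD)
  moreover have "hd ?qs \<in> V - S"
  proof
    have "hd ?qs \<in> set xs" using qs by (meson hd_in_set set_dropWhileD)
    then show "hd ?qs \<in> V" using assms(1) by (auto simp: walk_def)
    show "hd ?qs \<notin> S" using hd_dropWhile[OF qs] by simp
  qed
  ultimately show thesis using that by blast
qed

lemma leaf_tree_exists:
  assumes "connected_graph V R" "finite V" "r \<in> V"
  obtains F where "leaf_tree R V F"
proof -
  have "\<exists>F. leaf_tree R V F" if "leaf_tree R S F" "S \<subseteq> V" for S F
    using that
  proof (induction "card (V - S)" arbitrary: S F rule: less_induct)
    case less
    show ?case
    proof (cases "S = V")
      case False
      then obtain v where v: "v \<in> V - S" using less.prems(2) by blast
      obtain s0 where "s0 \<in> S" using leaf_tree_card[OF less.prems(1)] by fastforce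
      then obtain xs where "walk V R xs" "hd xs = s0" "last xs = v"
        using assms(1) less.prems(2) v unfolding connected_graph_def by blast
      then obtain s u where su: "s \<in> S" "u \<in> V - S" "{s, u} \<in> R"
        using \<open>s0 \<in> S\<close> v by (elim walk_exit_edge) auto
      have "leaf_tree R (insert u S) (insert {s, u} F)"
        using su less.prems(1) by (intro leaf_tree.add_leaf) auto
      moreover have "card (V - insert u S) < card (V - S)"
        using su assms(2) by (intro psubset_card_mono) auto
      ultimately show ?thesis using less su by blast
    qed (use less in blast)
  qed
  from this[OF leaf_tree.singleton] assms(3) show thesis using that by blast
qed

lemma walk_imp_distinct_walk:
  assumes "walk V E xs"
  obtains ys where "walk V E ys" "distinct ys" "hd ys = hd xs" "last ys = last xs"
proof -
  have "\<exists>ys. walk V E ys \<and> distinct ys \<and> hd ys = hd xs \<and> last ys = last xs"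
    using assms
  proof (induction "length xs" arbitrary: xs rule: less_induct)
    case less
    show ?case
    proof (cases "distinct xs")
      case False
      then obtain as y bs cs where xs: "xs = as @ [y] @ bs @ [y] @ cs"
        using not_distinct_decomp by blast
      have w: "walk V E (as @ y # bs @ y # cs)"
        using less.prems unfolding xs append_Cons append_Nil .
      have "walk V E (as @ [y])"
        using walk_append_Cons_iff[THEN iffD1, OF w] by blast
      moreover have "walk V E (y # cs)"
        using walk_append_Cons_iff[of V E "as @ y # bs" y cs, THEN iffD1] w by simp
      ultimately have "walk V E (as @ y # cs)"
        unfolding walk_append_Cons_iff[of V E as y cs] by blast
      moreover have "hd (as @ y # cs) = hd xs" "last (as @ y # cs) = last xs"
        using xs by (simp_all add: hd_append)
      moreover have "length (as @ y # cs) < length xs" using xs by simp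
      ultimately show ?thesis using less.hyps by metis
    qed (use less in blast)
  qed
  then show thesis using that by blast
qed

lemma spanning_tree_leaf_tree:
  assumes "graph V E" "spanning_tree V E T" "r \<in> V"
  shows "leaf_tree T V T"
proof -
  have fin: "finite V" using assms(1) by (simp add: graph_def)
  have T: "T \<subseteq> E" "connected_graph V T" "acyclic_graph V T"
    using assms(2) by (auto simp: spanning_tree_def)
  obtain F where F: "leaf_tree T V F"
    using leaf_tree_exists[OF T(2) fin assms(3)] .
  have "F \<subseteq> T" using leaf_tree_edges[OF F] by blast
  moreover have "e \<in> F" if "e \<in> T" for e
  proof (rule ccontr)
    assume "e \<notin> F"
    have "e \<subseteq> V" "card e = 2" using that T(1) assms(1) by (auto simp: graph_def)
    then obtain a b where ab: "e = {a, b}" "a \<noteq> b" "a \<in> V" "b \<in> V"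
      by (metis card_2_iff insert_subset)
    obtain xs where "walk V F xs" "hd xs = a" "last xs = b"
      using leaf_tree_connected[OF F] ab(3,4) unfolding connected_graph_def by blast
    then obtain ys where ys: "walk V F ys" "distinct ys" "hd ys = a" "last ys = b"
      by (metis walk_imp_distinct_walk)
    obtain y z zs where yzs: "ys = y # z # zs"
      using ys ab(2) walk_not_Nil[OF ys(1)] by (cases ys; cases "tl ys") auto
    have "zs \<noteq> []"
    proof
      assume "zs = []"
      then have "{a, b} \<in> F" using ys yzs by (simp add: walk_def)
      then show False using \<open>e \<notin> F\<close> ab(1) by simp
    qed
    then have "length ys \<ge> 3" using yzs by (cases zs) auto
    moreover have "walk V T ys" using walk_mono[OF ys(1) order_refl \<open>F \<subseteq> T\<close>] .
    ultimately have "simple_cycle V T ys"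
      using ys that ab(1) by (simp add: simple_cycle_def insert_commute)
    then show False using T(3) by (auto simp: acyclic_graph_def)
  qed
  ultimately show ?thesis using F by (metis subsetI subset_antisym)
qed

definition odd_vertices :: "'a set set \<Rightarrow> 'a set \<Rightarrow> 'a set" where
  "odd_vertices F S = {v \<in> S. odd (degree F v)}"

lemma odd_vertices_add_leaf:
  assumes "finite F" "\<forall>e\<in>F. e \<subseteq> S" "s \<in> S" "u \<notin> S"
  shows "odd_vertices (insert {s, u} F) (insert u S) =
    insert u (if s \<in> odd_vertices F S then odd_vertices F S - {s} else insert s (odd_vertices F S))"
proof -
  have new: "{s, u} \<notin> F" using assms(2,4) by blast
  have "degree (insert {s, u} F) v = degree F v + (if v \<in> {s, u} then 1 else 0)" for v
  proof -
    have "{e \<in> insert {s, u} F. v \<in> e} = (if v \<in> {s, u} then insert {s, u} {e \<in> F. v \<in> e} else {e \<in> F. v \<in> e})"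
      by auto
    then show ?thesis using assms(1) new by (simp add: degree_def)
  qed
  moreover have "degree F u = 0"
  proof -
    have none: "{e \<in> F. u \<in> e} = {}" using assms(2,4) by blast
    show ?thesis unfolding degree_def none by simp
  qed
  moreover have "s \<noteq> u" using assms(3,4) by blast
  ultimately show ?thesis using assms(3,4) by (auto simp: odd_vertices_def)
qed

lemma leaf_tree_even_odd_vertices: "leaf_tree R S F \<Longrightarrow> even (card (odd_vertices F S))"
proof (induction rule: leaf_tree.induct)
  case (singleton r)
  then show ?case by (simp add: odd_vertices_def degree_def)
next
  case (add_leaf S F s u)
  let ?O = "odd_vertices F S"
  have fin: "finite ?O" using leaf_tree_card[OF add_leaf.hyps(1)] by (simp add: odd_vertices_def)
  have "u \<notin> ?O" "s \<in> S" using add_leaf.hyps by (auto simp: odd_vertices_def)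
  moreover have "s \<noteq> u" using add_leaf.hyps by blast
  ultimately show ?case
    using odd_vertices_add_leaf[of F S s u] leaf_tree_card[OF add_leaf.hyps(1)]
      leaf_tree_edges[OF add_leaf.hyps(1)] add_leaf.hyps(3) add_leaf.IH fin
    by (auto simp: card_Diff_singleton card_insert_if)
qed

definition ends :: "'a list \<Rightarrow> 'a set" where
  "ends w = {hd w, last w}"

definition walk_pairing :: "'a set \<Rightarrow> 'a set set \<Rightarrow> 'a set \<Rightarrow> 'a list set \<Rightarrow> bool" where
  "walk_pairing V E X W \<longleftrightarrow> finite W \<and> (\<forall>w\<in>W. walk V E w \<and> hd w \<noteq> last w) \<and>
     disjoint_family_on ends W \<and> (\<Union>w\<in>W. ends w) = X"

lemma walk_pairing_empty: "walk_pairing V E {} {}"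
  by (simp add: walk_pairing_def disjoint_family_on_def)

lemma walk_pairing_empty_iff: "walk_pairing V E {} W \<longleftrightarrow> W = {}"
  by (auto simp: walk_pairing_def ends_def disjoint_family_on_def)

lemma walk_pairing_remove:
  assumes "walk_pairing V E X W" "w \<in> W"
  shows "walk_pairing V E (X - ends w) (W - {w})"
proof -
  have "(\<Union>v\<in>W - {w}. ends v) = X - ends w"
    using assms by (auto simp: walk_pairing_def disjoint_family_on_def)
  then show ?thesis
    using assms(1) disjoint_family_on_mono[of "W - {w}" W ends] by (auto simp: walk_pairing_def)
qed

lemma walk_pairing_insert:
  assumes "walk_pairing V E X W" "walk V E w" "hd w \<noteq> last w" "ends w \<inter> X = {}"
  shows "walk_pairing V E (ends w \<union> X) (insert w W)"
proof -
  have "w \<notin> W"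
    using assms(1,4) by (auto simp: walk_pairing_def ends_def)
  then show ?thesis
    using assms by (auto simp: walk_pairing_def disjoint_family_on_insert)
qed

lemma walk_reversal:
  assumes "w0 \<in> {w, rev w}" "walk V E w"
  shows "walk V E w0" "set w0 = set w" "walk_length w0 = walk_length w" "ends w0 = ends w"
    "hd w0 = last w0 \<longleftrightarrow> hd w = last w"
  using assms walk_rev by (auto simp: walk_length_def ends_def hd_rev last_rev)

lemma walk_pairing_end:
  assumes "walk_pairing V E X W" "u \<in> X"
  obtains w w0 where "w \<in> W" "w0 \<in> {w, rev w}" "hd w0 = u" "ends w = {u, last w0}"
    "last w0 \<in> X"
proof -
  obtain w where w: "w \<in> W" "u \<in> ends w"
    using assms by (auto simp: walk_pairing_def)
  have "hd w \<noteq> last w" "ends w \<subseteq> X"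
    using assms(1) w(1) by (auto simp: walk_pairing_def)
  moreover obtain w0 where "w0 \<in> {w, rev w}" "hd w0 = u"
  proof (cases "hd w = u")
    case False
    then have "last w = u" using w(2) by (auto simp: ends_def)
    then show thesis using that[of "rev w"] by (simp add: hd_rev)
  next
    case True
    then show thesis using that[of w] by simp
  qed
  ultimately show thesis
    using that[of w w0] w by (auto simp: ends_def hd_rev last_rev insert_commute)
qed

lemma walk_pairing_sum_remove:
  "walk_pairing V E X W \<Longrightarrow> w \<in> W \<Longrightarrow>
    (\<Sum>v\<in>W. walk_length v) = walk_length w + (\<Sum>v\<in>W - {w}. walk_length v)"
  by (simp add: walk_pairing_def sum.remove)

lemma walk_pairing_close:
  assumes P: "walk_pairing V E X W" and w: "w \<in> W" "w0 \<in> {w, rev w}" "hd w0 = u" "last w0 = s"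
    and "s \<in> V" "{s, u} \<in> E"
  shows "walk_pairing V E (X - {s, u}) (W - {w})" "closed_walk V E (s # w0)"
    "(\<Sum>v\<in>W - {w}. walk_length v) + walk_length (s # w0) = (\<Sum>v\<in>W. walk_length v) + 1"
    "set w \<subseteq> set (s # w0)"
proof -
  have wE: "walk V E w" using P w(1) by (simp add: walk_pairing_def)
  note w0 = walk_reversal[OF w(2) wE]
  have ne: "w0 \<noteq> []" using walk_not_Nil[OF w0(1)] .
  have "ends w = {s, u}" using w0(4) w(3,4) by (auto simp: ends_def)
  then show "walk_pairing V E (X - {s, u}) (W - {w})"
    using walk_pairing_remove[OF P w(1)] by simp
  show "closed_walk V E (s # w0)"
    using walk_Cons[OF w0(1) \<open>s \<in> V\<close>] w(3,4) \<open>{s, u} \<in> E\<close> ne by (simp add: closed_walk_def)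
  show "(\<Sum>v\<in>W - {w}. walk_length v) + walk_length (s # w0) = (\<Sum>v\<in>W. walk_length v) + 1"
    using walk_pairing_sum_remove[OF P w(1)] w0(3) ne by (simp add: walk_length_Cons)
  show "set w \<subseteq> set (s # w0)" using w0(2) by auto
qed

lemma walk_pairing_extend:
  assumes P: "walk_pairing V E X W" and w: "w \<in> W" "w0 \<in> {w, rev w}" "hd w0 = u"
    and s: "s \<notin> X" "s \<in> V" "{s, u} \<in> E"
  shows "walk_pairing V E (insert s (X - {u})) (insert (s # w0) (W - {w}))"
    "(\<Sum>v\<in>insert (s # w0) (W - {w}). walk_length v) \<le> (\<Sum>v\<in>W. walk_length v) + 1"
    "set w \<subseteq> set (s # w0)"
proof -
  have wE: "walk V E w" and X: "ends w \<subseteq> X" and "hd w \<noteq> last w"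
    using P w(1) by (auto simp: walk_pairing_def)
  note w0 = walk_reversal[OF w(2) wE]
  have ul: "u \<noteq> last w0" using w0(5) w(3) \<open>hd w \<noteq> last w\<close> by simp
  have ne: "w0 \<noteq> []" using walk_not_Nil[OF w0(1)] .
  have R: "walk_pairing V E (X - ends w) (W - {w})" using walk_pairing_remove[OF P w(1)] .
  have ends: "ends (s # w0) = {s, last w0}" "ends w = {u, last w0}"
    using w0(4) ne w(3) by (auto simp: ends_def)
  have "walk V E (s # w0)" using walk_Cons[OF w0(1)] s w(3) by simp
  moreover have "hd (s # w0) \<noteq> last (s # w0)" "ends (s # w0) \<inter> (X - ends w) = {}"
    using ends X s(1) ne by auto
  ultimately have "walk_pairing V E (ends (s # w0) \<union> (X - ends w)) (insert (s # w0) (W - {w}))"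
    by (rule walk_pairing_insert[OF R])
  moreover have "ends (s # w0) \<union> (X - ends w) = insert s (X - {u})"
    using ends X ul by auto
  ultimately show "walk_pairing V E (insert s (X - {u})) (insert (s # w0) (W - {w}))" by simp
  have "walk_length (s # w0) = walk_length w + 1"
    using w0(3) ne by (simp add: walk_length_Cons)
  then show "(\<Sum>v\<in>insert (s # w0) (W - {w}). walk_length v) \<le> (\<Sum>v\<in>W. walk_length v) + 1"
    using walk_pairing_sum_remove[OF P w(1)] R by (simp add: walk_pairing_def sum.insert_if)
  show "set w \<subseteq> set (s # w0)" using w0(2) by auto
qed

lemma walk_pairing_join:
  assumes P: "walk_pairing V E X W" and w: "w \<in> W" "w0 \<in> {w, rev w}" "hd w0 = u"
    and w2: "w2 \<in> W" "w1 \<in> {w2, rev w2}" "hd w1 = s" "w2 \<noteq> w" and "{s, u} \<in> E"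
  shows "walk_pairing V E (X - {s, u}) (insert (rev w1 @ w0) (W - {w, w2}))"
    "(\<Sum>v\<in>insert (rev w1 @ w0) (W - {w, w2}). walk_length v) \<le> (\<Sum>v\<in>W. walk_length v) + 1"
    "set w \<union> set w2 \<subseteq> set (rev w1 @ w0)"
proof -
  have wE: "walk V E w" "walk V E w2" and X: "ends w \<subseteq> X" "ends w2 \<subseteq> X"
    and "hd w \<noteq> last w" "hd w2 \<noteq> last w2" and disj: "ends w \<inter> ends w2 = {}"
    using P w(1) w2 by (auto simp: walk_pairing_def disjoint_family_on_def)
  note w0 = walk_reversal[OF w(2) wE(1)] and w1 = walk_reversal[OF w2(2) wE(2)]
  have ne: "w0 \<noteq> []" "rev w1 \<noteq> []" using walk_not_Nil w0(1) w1(1) by auto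
  have ends: "ends w = {u, last w0}" "ends w2 = {s, last w1}"
    using w0(4) w1(4) w(3) w2(3) by (auto simp: ends_def)
  have R: "walk_pairing V E (X - ends w - ends w2) (W - {w, w2})"
    using walk_pairing_remove[OF walk_pairing_remove[OF P w(1)], of w2] w2 by (simp add: set_diff_eq)
  have "walk V E (rev w1 @ w0)"
    using walk_append[OF walk_rev[OF w1(1)] w0(1)] w(3) w2(3) \<open>{s, u} \<in> E\<close>
    by (simp add: last_rev insert_commute)
  moreover have ends_new: "ends (rev w1 @ w0) = {last w1, last w0}"
    using ne by (simp add: ends_def hd_rev)
  moreover have "last w1 \<noteq> last w0" using disj ends by auto
  moreover have "ends (rev w1 @ w0) \<inter> (X - ends w - ends w2) = {}"
    using ends_new ends by auto
  ultimately have "walk_pairing V E (ends (rev w1 @ w0) \<union> (X - ends w - ends w2))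
      (insert (rev w1 @ w0) (W - {w, w2}))"
    using ne by (intro walk_pairing_insert[OF R]) (auto simp: hd_rev)
  moreover have "ends (rev w1 @ w0) \<union> (X - ends w - ends w2) = X - {s, u}"
    using ends_new ends X disj \<open>hd w \<noteq> last w\<close> \<open>hd w2 \<noteq> last w2\<close> w0(5) w1(5) w(3) w2(3)
    by auto
  ultimately show "walk_pairing V E (X - {s, u}) (insert (rev w1 @ w0) (W - {w, w2}))"
    by simp
  have "walk_length (rev w1 @ w0) = walk_length w2 + walk_length w + 1"
    using walk_length_append[OF ne(2,1)] w0(3) w1(3) by (simp add: walk_length_def)
  moreover have "(\<Sum>v\<in>W. walk_length v) = walk_length w + walk_length w2 + (\<Sum>v\<in>W - {w, w2}. walk_length v)"
    using walk_pairing_sum_remove[OF P w(1)] walk_pairing_sum_remove[OF walk_pairing_remove[OF P w(1)], of w2] w2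
    by (simp add: set_diff_eq)
  ultimately show "(\<Sum>v\<in>insert (rev w1 @ w0) (W - {w, w2}). walk_length v) \<le> (\<Sum>v\<in>W. walk_length v) + 1"
    using R by (simp add: walk_pairing_def sum.insert_if)
  show "set w \<union> set w2 \<subseteq> set (rev w1 @ w0)" using w0(2) w1(2) by auto
qed

text \<open>The tree edge \<open>{s, u}\<close> to the leaf \<open>u\<close> is traversed once: it turns the walk ending
  at \<open>u\<close> into a loop at \<open>s\<close>, joins it to the walk ending at \<open>s\<close>, or extends it to \<open>s\<close>.\<close>

lemma walk_pairing_reroute:
  assumes P: "walk_pairing V E X W" and X: "X = insert u (if s \<in> Y then Y - {s} else insert s Y)"
    and "u \<notin> Y" "s \<in> V" "s \<noteq> u" "{s, u} \<in> E"
  obtains W' l where "walk_pairing V E Y W'" "closed_walk V E l" "hd l = s"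
    "(\<Sum>v\<in>W'. walk_length v) + walk_length l \<le> (\<Sum>v\<in>W. walk_length v) + 1"
    "insert u (\<Union>v\<in>W. set v) \<subseteq> set l \<union> (\<Union>v\<in>W'. set v)"
proof -
  have "u \<in> X" using X by simp
  have Y: "Y = (if s \<in> X then X - {s, u} else insert s (X - {u}))"
    using X \<open>u \<notin> Y\<close> \<open>s \<noteq> u\<close> by auto
  obtain w w0 where w: "w \<in> W" "w0 \<in> {w, rev w}" "hd w0 = u" "ends w = {u, last w0}"
    "last w0 \<in> X"
    by (rule walk_pairing_end[OF P \<open>u \<in> X\<close>])
  have wE: "walk V E w" using P w(1) by (simp add: walk_pairing_def)
  note w0 = walk_reversal[OF w(2) wE]
  have u_in: "u \<in> set w" using w0(2) w(3) hd_in_set walk_not_Nil[OF w0(1)] by blast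
  have single: "closed_walk V E [s]" "walk_length [s] = 0"
    using \<open>s \<in> V\<close> by (simp_all add: closed_walk_def walk_length_def)
  consider "last w0 = s" | "last w0 \<noteq> s" "s \<in> X" | "s \<notin> X" using w(5) by blast
  then show thesis
  proof cases
    case 1
    note J = walk_pairing_close[OF P w(1-3) 1 \<open>s \<in> V\<close> \<open>{s, u} \<in> E\<close>]
    have "insert u (\<Union>v\<in>W. set v) \<subseteq> set (s # w0) \<union> (\<Union>v\<in>W - {w}. set v)"
      using J(4) u_in by blast
    then show thesis using that[OF _ J(2)] J(1,3) 1 w(5) Y by simp
  next
    case 2
    obtain w2 w1 where w2: "w2 \<in> W" "w1 \<in> {w2, rev w2}" "hd w1 = s" "ends w2 = {s, last w1}"
      using walk_pairing_end[OF P \<open>s \<in> X\<close>] by metis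
    have "w2 \<noteq> w" using w(4) w2(4) 2(1) \<open>s \<noteq> u\<close> by auto
    note J = walk_pairing_join[OF P w(1-3) w2(1-3) this \<open>{s, u} \<in> E\<close>]
    have "insert u (\<Union>v\<in>W. set v) \<subseteq> set [s] \<union> (\<Union>v\<in>insert (rev w1 @ w0) (W - {w, w2}). set v)"
      using J(3) u_in by blast
    then show thesis using that[OF _ single(1)] J(1,2) single(2) 2(2) Y by simp
  next
    case 3
    note J = walk_pairing_extend[OF P w(1-3) 3 \<open>s \<in> V\<close> \<open>{s, u} \<in> E\<close>]
    have "insert u (\<Union>v\<in>W. set v) \<subseteq> set [s] \<union> (\<Union>v\<in>insert (s # w0) (W - {w}). set v)"
      using J(3) u_in by blast
    then show thesis using that[OF _ single(1)] J(1,2) single(2) 3 Y by simp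
  qed
qed

lemma leaf_tree_tour:
  assumes "leaf_tree R S F" "R \<subseteq> E" "S \<subseteq> V" "walk_pairing V E (odd_vertices F S) W"
  obtains xs where "closed_walk V E xs" "S \<union> (\<Union>w\<in>W. set w) \<subseteq> set xs"
    "walk_length xs \<le> card F + (\<Sum>w\<in>W. walk_length w)"
proof -
  have "\<exists>xs. closed_walk V E xs \<and> S \<union> (\<Union>w\<in>W. set w) \<subseteq> set xs \<and>
      walk_length xs \<le> card F + (\<Sum>w\<in>W. walk_length w)"
    using assms
  proof (induction arbitrary: W rule: leaf_tree.induct)
    case (singleton r)
    then have "W = {}"
      by (simp add: odd_vertices_def degree_def walk_pairing_empty_iff)
    then show ?case
      using singleton by (intro exI[of _ "[r]"]) (simp add: closed_walk_def walk_length_def)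
  next
    case (add_leaf S F s u)
    let ?O = "odd_vertices F S"
    have s: "s \<in> V" "s \<noteq> u" "{s, u} \<in> E" using add_leaf.hyps add_leaf.prems by auto
    have fin: "finite F" "\<forall>e\<in>F. e \<subseteq> S"
      using leaf_tree_card[OF add_leaf.hyps(1)] leaf_tree_edges[OF add_leaf.hyps(1)] by auto
    have "u \<notin> ?O" using add_leaf.hyps(3) by (simp add: odd_vertices_def)
    obtain W' l where W': "walk_pairing V E ?O W'" "closed_walk V E l" "hd l = s"
      "(\<Sum>v\<in>W'. walk_length v) + walk_length l \<le> (\<Sum>v\<in>W. walk_length v) + 1"
      "insert u (\<Union>v\<in>W. set v) \<subseteq> set l \<union> (\<Union>v\<in>W'. set v)"
      using walk_pairing_reroute[OF add_leaf.prems(3)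
          odd_vertices_add_leaf[OF fin add_leaf.hyps(2,3)] \<open>u \<notin> ?O\<close> s] .
    obtain xs where xs: "closed_walk V E xs" "S \<union> (\<Union>w\<in>W'. set w) \<subseteq> set xs"
      "walk_length xs \<le> card F + (\<Sum>w\<in>W'. walk_length w)"
      using add_leaf.IH[OF add_leaf.prems(1) _ W'(1)] add_leaf.prems(2) by auto
    obtain zs where zs: "closed_walk V E zs" "set zs = set xs \<union> set l"
      "walk_length zs = walk_length xs + walk_length l"
      using closed_walk_splice[OF xs(1) _ W'(2,3)] xs(2) add_leaf.hyps(2) by blast
    have "card (insert {s, u} F) = card F + 1"
      using leaf_tree_card[OF add_leaf.hyps(1)] leaf_tree_card[OF leaf_tree.add_leaf[OF add_leaf.hyps]]
        add_leaf.hyps(3) by simp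
    then have "walk_length zs \<le> card (insert {s, u} F) + (\<Sum>w\<in>W. walk_length w)"
      using zs(3) xs(3) W'(4) by simp
    moreover have "insert u S \<union> (\<Union>w\<in>W. set w) \<subseteq> set zs"
    proof -
      have cover: "insert u S \<union> B \<subseteq> set xs \<union> set l"
        if "insert u B \<subseteq> set l \<union> A" "S \<union> A \<subseteq> set xs" for A B
        using that by blast
      show ?thesis unfolding zs(2) by (rule cover[OF W'(5) xs(2)])
    qed
    ultimately show ?case using zs(1) by auto
  qed
  then show thesis using that by blast
qed

fun pairup :: "'b list \<Rightarrow> ('b \<times> 'b) list" where
  "pairup (a # b # r) = (a, b) # pairup r"
| "pairup _ = []"

lemma pairup_snoc: "even (length xs) \<Longrightarrow> pairup (xs @ [x]) = pairup xs"
  by (induction xs rule: pairup.induct) auto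

lemma pairup_telescope:
  assumes "sorted (xs :: nat list)" "xs \<noteq> []"
  shows "(\<Sum>(a, b)\<leftarrow>pairup xs. b - a) + (\<Sum>(a, b)\<leftarrow>pairup (tl xs). b - a) = last xs - hd xs"
  using assms
proof (induction xs)
  case (Cons x xs)
  show ?case
  proof (cases xs)
    case (Cons y r)
    then have "x \<le> y" "y \<le> last xs" using Cons.prems by auto
    then show ?thesis using Cons.IH Cons.prems \<open>xs = y # r\<close> by simp
  qed simp
qed simp

definition segment :: "'a list \<Rightarrow> nat \<Rightarrow> nat \<Rightarrow> 'a list" where
  "segment D i j = take (j - i + 1) (drop i D)"

lemma walk_segment:
  assumes "walk V E D" "i < j" "j < length D"
  shows "walk V E (segment D i j)" "hd (segment D i j) = D ! i" "last (segment D i j) = D ! j"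
    "walk_length (segment D i j) = j - i"
  using assms by (auto simp: segment_def walk_length_def hd_drop_conv_nth last_conv_nth
      intro!: walk_take walk_drop)

lemma walk_pairing_segments:
  assumes "walk V E D" "sorted_wrt (<) L" "even (length L)" "\<forall>i\<in>set L. i < length D"
    "inj_on ((!) D) (set L)"
  obtains W where "walk_pairing V E ((!) D ` set L) W"
    "(\<Sum>w\<in>W. walk_length w) \<le> (\<Sum>(i, j)\<leftarrow>pairup L. j - i)"
proof -
  have "\<exists>W. walk_pairing V E ((!) D ` set L) W \<and>
      (\<Sum>w\<in>W. walk_length w) \<le> (\<Sum>(i, j)\<leftarrow>pairup L. j - i)"
    using assms(2-5)
  proof (induction L rule: pairup.induct)
    case (1 i j r)
    then obtain W where W: "walk_pairing V E ((!) D ` set r) W"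
      "(\<Sum>w\<in>W. walk_length w) \<le> (\<Sum>(i, j)\<leftarrow>pairup r. j - i)"
      by (auto simp: inj_on_insert)
    have ij: "i < j" "j < length D" using "1.prems" by auto
    note seg = walk_segment[OF assms(1) ij]
    have "D ! i \<noteq> D ! j" "D ! i \<notin> (!) D ` set r" "D ! j \<notin> (!) D ` set r"
      using "1.prems"(1,4) ij(1) by (auto simp: inj_on_def)
    then have "walk_pairing V E (ends (segment D i j) \<union> (!) D ` set r) (insert (segment D i j) W)"
      using seg by (intro walk_pairing_insert[OF W(1)]) (auto simp: ends_def)
    moreover have "ends (segment D i j) \<union> (!) D ` set r = (!) D ` set (i # j # r)"
      using seg by (auto simp: ends_def)
    moreover have "(\<Sum>w\<in>insert (segment D i j) W. walk_length w) \<le> (j - i) + (\<Sum>w\<in>W. walk_length w)"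
      using W(1) seg(4) by (simp add: walk_pairing_def sum.insert_if)
    ultimately show ?case using W(2) by (intro exI[of _ "insert (segment D i j) W"]) auto
  qed (auto intro: walk_pairing_empty)
  then show thesis using that by blast
qed

lemma sorted_positions:
  assumes "distinct C" "X \<subseteq> set C"
  obtains ps where "sorted_wrt (<) ps" "\<forall>i\<in>set ps. i < length C" "(!) C ` set ps = X"
    "length ps = card X"
proof -
  define ps where "ps = sorted_list_of_set {i. i < length C \<and> C ! i \<in> X}"
  have ps: "sorted_wrt (<) ps" "distinct ps" "\<forall>i\<in>set ps. i < length C"
    by (auto simp: ps_def strict_sorted_list_of_set)
  have X: "(!) C ` set ps = X"
  proof
    show "X \<subseteq> (!) C ` set ps"
    proof
      fix x assume "x \<in> X"
      then have "x \<in> set C" using assms(2) by blast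
      then obtain i where "i < length C" "C ! i = x" by (auto simp: in_set_conv_nth)
      then show "x \<in> (!) C ` set ps" using \<open>x \<in> X\<close> by (auto simp: ps_def)
    qed
  qed (auto simp: ps_def)
  have "card X = length ps"
    unfolding X[symmetric] using card_image[OF inj_on_nth[OF assms(1) ps(3)]] distinct_card[OF ps(2)]
    by simp
  then show thesis using that ps(1,3) X by simp
qed

text \<open>In \<open>C @ C\<close> the arc of \<open>C\<close> from position \<open>q\<close> over the end of \<open>C\<close> to position
  \<open>p < q\<close> is the segment from \<open>q\<close> to \<open>p + length C\<close>.\<close>

lemma simple_cycle_wrapped_pairing:
  assumes C: "simple_cycle V E C" and ps: "sorted_wrt (<) (p # qs)" "\<forall>i\<in>set (p # qs). i < length C"
    and "odd (length qs)"
  obtains W where "walk_pairing V E ((!) C ` set (p # qs)) W"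
    "(\<Sum>w\<in>W. walk_length w) \<le> (\<Sum>(i, j)\<leftarrow>pairup (qs @ [p + length C]). j - i)"
proof -
  define L where "L = qs @ [p + length C]"
  have wC: "walk V E C" "distinct C" "{last C, hd C} \<in> E"
    using C by (auto simp: simple_cycle_def)
  have "sorted_wrt (<) L" using ps by (auto simp: L_def sorted_wrt_append)
  moreover have "even (length L)" using \<open>odd (length qs)\<close> by (simp add: L_def)
  moreover have "\<forall>i\<in>set L. i < length (C @ C)" using ps(2) by (auto simp: L_def)
  moreover have img: "(!) (C @ C) ` set L = (!) C ` set (p # qs)"
    using ps(2) by (auto simp: L_def nth_append)
  moreover have "inj_on ((!) (C @ C)) (set L)"
  proof -
    have "distinct L" using ps by (auto simp: L_def strict_sorted_iff)
    moreover have "distinct (p # qs)" using ps(1) strict_sorted_iff by blast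
    ultimately have "card (set L) = card ((!) C ` set (p # qs))"
      using card_image[OF inj_on_nth[OF wC(2) ps(2)]] by (simp add: distinct_card L_def)
    then show ?thesis using img by (simp add: inj_on_iff_eq_card)
  qed
  ultimately show thesis
    using walk_pairing_segments[OF walk_append[OF wC(1,1,3)]] that by (metis L_def)
qed

text \<open>Pairing consecutive odd vertices along \<open>C\<close> can be done in two ways, and the two pairings
  together cover every edge of \<open>C\<close> exactly once; the cheaper one costs at most half of \<open>C\<close>.\<close>

lemma simple_cycle_walk_pairing:
  assumes C: "simple_cycle V E C" and "X \<subseteq> set C" "even (card X)"
  obtains W where "walk_pairing V E X W" "2 * (\<Sum>w\<in>W. walk_length w) \<le> length C"
proof -
  have wC: "walk V E C" "distinct C" using C by (auto simp: simple_cycle_def)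
  obtain ps where ps: "sorted_wrt (<) ps" "\<forall>i\<in>set ps. i < length C" "(!) C ` set ps = X"
    and even: "even (length ps)"
    using sorted_positions[OF wC(2) assms(2)] assms(3) by metis
  obtain W1 where W1: "walk_pairing V E X W1"
    "(\<Sum>w\<in>W1. walk_length w) \<le> (\<Sum>(i, j)\<leftarrow>pairup ps. j - i)"
    using walk_pairing_segments[OF wC(1) ps(1) even ps(2) inj_on_nth[OF wC(2) ps(2)]] ps(3) by metis
  show thesis
  proof (cases ps)
    case Nil
    then show thesis using W1 that by simp
  next
    case (Cons p qs)
    obtain W2 where W2: "walk_pairing V E X W2"
      "(\<Sum>w\<in>W2. walk_length w) \<le> (\<Sum>(i, j)\<leftarrow>pairup (qs @ [p + length C]). j - i)"
      using simple_cycle_wrapped_pairing[OF C] ps even Cons by (metis even_Suc length_Cons)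
    have "sorted (ps @ [p + length C])"
      using ps(1,2) Cons by (auto simp: sorted_append strict_sorted_iff)
    from pairup_telescope[OF this]
    have "(\<Sum>(i, j)\<leftarrow>pairup ps. j - i) + (\<Sum>(i, j)\<leftarrow>pairup (qs @ [p + length C]). j - i) = length C"
      using pairup_snoc[OF even, of "p + length C"] Cons by simp
    then have "2 * (\<Sum>w\<in>W1. walk_length w) \<le> length C \<or> 2 * (\<Sum>w\<in>W2. walk_length w) \<le> length C"
      using W1(2) W2(2) by linarith
    then show thesis using that W1(1) W2(1) by blast
  qed
qed

lemma closed_walk_extend_to_tour:
  assumes "connected_graph V E" "finite V" "closed_walk V E xs"
  obtains ys where "tsp_tour V E ys" "walk_length ys \<le> walk_length xs + 2 * card (V - set xs)"
proof -
  have "\<exists>ys. tsp_tour V E ys \<and> walk_length ys \<le> walk_length xs + 2 * card (V - set xs)"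
    using assms(3)
  proof (induction "card (V - set xs)" arbitrary: xs rule: less_induct)
    case less
    have xs: "walk V E xs" "set xs \<subseteq> V" using less.prems by (auto simp: closed_walk_def walk_def)
    show ?case
    proof (cases "set xs = V")
      case True
      then show ?thesis using less.prems by (auto simp: tsp_tour_def closed_walk_def)
    next
      case False
      then obtain v where v: "v \<in> V" "v \<notin> set xs" using xs(2) by blast
      obtain ws where "walk V E ws" "hd ws = hd xs" "last ws = v"
        using assms(1) v(1) xs hd_in_set walk_not_Nil unfolding connected_graph_def by (metis subsetD)
      then obtain s u where su: "s \<in> set xs" "u \<in> V - set xs" "{s, u} \<in> E"
        using v walk_not_Nil[OF xs(1)] by (elim walk_exit_edge) auto
      have loop: "closed_walk V E [s, u, s]"
        using su xs(2) by (auto simp: closed_walk_def walk_iff_successively insert_commute)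
      obtain zs where zs: "closed_walk V E zs" "set zs = set xs \<union> set [s, u, s]"
        "walk_length zs = walk_length xs + walk_length [s, u, s]"
        using closed_walk_splice[OF less.prems su(1) loop list.sel(1)] by blast
      have "set zs = insert u (set xs)" "walk_length zs = walk_length xs + 2"
        using zs(2,3) su(1) by (auto simp: walk_length_def)
      have "V - set zs = (V - set xs) - {u}" using \<open>set zs = insert u (set xs)\<close> by blast
      then have card: "card (V - set xs) = card (V - set zs) + 1"
        using su(2) assms(2) card_Diff_singleton[of u "V - set xs"] card_gt_0_iff[of "V - set xs"]
        by force
      show ?thesis using less.hyps[of zs] zs(1) \<open>walk_length zs = walk_length xs + 2\<close> card by auto
    qed
  qed
  then show thesis using that by blast
qed

lemma tour_from_cycle:
  assumes "connected_graph V E" "finite V" "simple_cycle V E C"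
  obtains xs where "tsp_tour V E xs" "walk_length xs + length C \<le> 2 * card V"
proof -
  have C: "walk V E C" "distinct C" "{last C, hd C} \<in> E" "C \<noteq> []"
    using assms(3) by (auto simp: simple_cycle_def walk_def)
  have "walk V E (C @ [hd C])"
    using walk_append[OF C(1), of "[hd C]"] C(3) walk_hd_in[OF C(1)] by simp
  then have "closed_walk V E (C @ [hd C])"
    using C(4) by (simp add: closed_walk_def)
  then obtain xs where xs: "tsp_tour V E xs"
    "walk_length xs \<le> walk_length (C @ [hd C]) + 2 * card (V - set (C @ [hd C]))"
    using closed_walk_extend_to_tour[OF assms(1,2)] by blast
  have "set C \<subseteq> V" using C(1) by (simp add: walk_def)
  then have "card (V - set C) + length C = card V"
    using card_mono[OF assms(2) \<open>set C \<subseteq> V\<close>] distinct_card[OF C(2)] assms(2)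
    by (simp add: card_Diff_subset)
  moreover have "set (C @ [hd C]) = set C" "walk_length (C @ [hd C]) = length C"
    using C(4) by (auto simp: walk_length_def)
  ultimately have "walk_length xs + length C \<le> 2 * card V" using xs(2) by simp
  with xs(1) show thesis by (rule that)
qed

lemma tour_from_spanning_tree:
  assumes "graph V E" "spanning_tree V E T" "simple_cycle V E C" "odd_vertices T V \<subseteq> set C"
  obtains xs where "tsp_tour V E xs" "2 * walk_length xs \<le> 2 * (card V - 1) + length C"
proof -
  have C: "walk V E C" "C \<noteq> []" using assms(3) by (auto simp: simple_cycle_def walk_def)
  then have "hd C \<in> V" by (simp add: walk_hd_in)
  then have T: "leaf_tree T V T" using spanning_tree_leaf_tree[OF assms(1,2)] by blast
  obtain W where W: "walk_pairing V E (odd_vertices T V) W" "2 * (\<Sum>w\<in>W. walk_length w) \<le> length C"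
    using simple_cycle_walk_pairing[OF assms(3,4) leaf_tree_even_odd_vertices[OF T]] by blast
  have "T \<subseteq> E" using assms(2) by (simp add: spanning_tree_def)
  then obtain xs where xs: "closed_walk V E xs" "V \<union> (\<Union>w\<in>W. set w) \<subseteq> set xs"
    "walk_length xs \<le> card T + (\<Sum>w\<in>W. walk_length w)"
    by (rule leaf_tree_tour[OF T _ order_refl W(1)])
  have "set xs \<subseteq> V" using xs(1) by (simp add: closed_walk_def walk_def)
  then have "tsp_tour V E xs" using xs(1,2) by (auto simp: tsp_tour_def closed_walk_def)
  moreover have "card T = card V - 1" using leaf_tree_card[OF T] by (elim conjE) linarith
  ultimately have "2 * walk_length xs \<le> 2 * (card V - 1) + length C" using xs(3) W(2) by simp
  with \<open>tsp_tour V E xs\<close> show thesis by (rule that)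
qed

theorem theorem1:
  fixes V :: "'a set" and E :: "'a set set" and T :: "'a set set" and C :: "'a list"
  assumes "graph V E"
    and "two_vertex_connected V E"
    and "min_spanning_tree V E T"
    and "simple_cycle V E C"
    and "{v \<in> V. odd (degree T v)} \<subseteq> set C"
  shows "\<exists>xs. tsp_tour V E xs \<and> real (walk_length xs) \<le> 4 * real (card V) / 3"
proof -
  have "finite V" "connected_graph V E" "spanning_tree V E T"
    using assms(1-3) by (auto simp: graph_def two_vertex_connected_def min_spanning_tree_def)
  obtain xs1 where xs1: "tsp_tour V E xs1" "walk_length xs1 + length C \<le> 2 * card V"
    using tour_from_cycle[OF \<open>connected_graph V E\<close> \<open>finite V\<close> assms(4)] .
  obtain xs2 where xs2: "tsp_tour V E xs2" "2 * walk_length xs2 \<le> 2 * (card V - 1) + length C"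
    using tour_from_spanning_tree[OF assms(1) \<open>spanning_tree V E T\<close> assms(4)] assms(5)
    by (auto simp: odd_vertices_def)
  have "3 * walk_length xs1 \<le> 4 * card V \<or> 3 * walk_length xs2 \<le> 4 * card V"
    using xs1(2) xs2(2) by arith
  then obtain xs where xs: "tsp_tour V E xs" "3 * walk_length xs \<le> 4 * card V"
    using xs1(1) xs2(1) by blast
  then have "3 * real (walk_length xs) \<le> 4 * real (card V)"
    by (metis of_nat_le_iff of_nat_mult of_nat_numeral)
  then show ?thesis using xs(1) by (intro exI[of _ xs]) simp
qed

end
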